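(* For every integer $n\geq 3$, $$\sum_{\substack{k+l+m=n\\ k,l,m\geq 1}}\frac{B_{2k}B_{2l}B_{2m}}{(2k)(2l)(2m)}=\frac{3}{2n}\sum_{\substack{k+l+m=n\\ k,l,m\geq 1}}\frac{B_{2k}B_{2l}B_{2m}}{(2k)(2l)}\binom{2n}{2k,2l,2m}+\frac3n H_{2n}\sum_{k=1}^{n-1}\binom{2n}{2k}\frac{B_{2k}B_{2n-2k}}{2k}+6H_{2n,2}\frac{B_{2n}}{2n}-\Big(n^2-\tfrac32 n+\tfrac54\Big)\frac{B_{2n-2}}{2n-2}.$$
   Context: $B_n$ denotes the Bernoulli numbers, defined by $\frac{x}{e^x-1}=\sum_{n\ge 0}B_n\frac{x^n}{n!}$. $H_i=\sum_{j=1}^i\frac1j$ is the $i$-th harmonic number, and $H_{2n,2}:=\sum_{1\le i<j\le 2n}\frac{1}{ij}$. $\binom{2n}{2k,2l,2m}=\frac{(2n)!}{(2k)!(2l)!(2m)!}$ is the multinomial coefficient. *)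

theory Defs
  imports "HOL-Analysis.Harmonic_Numbers" "HOL-Computational_Algebra.Formal_Power_Series"
begin

definition bernoulli :: "nat \<Rightarrow> real" where
  "bernoulli n = fact n * fps_nth (fps_X / (fps_exp 1 - 1)) n"

definition harm2 :: "nat \<Rightarrow> real" where
  "harm2 N = (\<Sum>(i,j)\<in>{(i,j). 1 \<le> i \<and> i < j \<and> j \<le> N}. 1 / (real i * real j))"

definition comp3 :: "nat \<Rightarrow> (nat \<times> nat \<times> nat) set" where
  "comp3 n = {(k,l,m). k \<ge> 1 \<and> l \<ge> 1 \<and> m \<ge> 1 \<and> k + l + m = n}"

definition multinom3 :: "nat \<Rightarrow> nat \<Rightarrow> nat \<Rightarrow> nat \<Rightarrow> real" where
  "multinom3 N a b c = fact N / (fact a * fact b * fact c)"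

end

theory Submission
  imports Defs "HOL-Computational_Algebra.Polynomial"
begin

text \<open>
  For \<open>m \<in> \<nat>\<close> let \<open>\<lambda>\<^sub>N(m) = (\<Sum>j=1..m. (-j)^N) / N\<close>. Then
  \<open>\<Sum>\<^sub>N \<lambda>\<^sub>N(m) t^N = -(\<Sum>j=1..m. ln (1 + j t))\<close>, whose exponential is
  \<open>\<Prod>j=1..m. 1 / (1 + j t)\<close>.
  Comparing the recursions in \<open>m\<close>, the coefficient of \<open>t^N\<close> in this product is
  \<open>pochhammer (m + 1) N * [x^N] u(x)^m\<close>, where \<open>u(x) = (1 - exp (-x)) / x = exp \<gamma>(x)\<close> and
  \<open>\<gamma>(x) = \<Sum>\<^sub>N B\<^sub>N x^N / (N * N!)\<close>. By Faulhaber's formula \<open>\<lambda>\<^sub>N\<close> is a polynomial, so both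
  descriptions are power series in \<open>t\<close> whose coefficients are polynomials in \<open>y\<close> that agree at
  all natural numbers; hence they are equal. The theorem compares the coefficients of
  \<open>y^3 t^(2n)\<close>. On the left, the linear coefficient \<open>B\<^sub>N / N\<close> of \<open>\<lambda>\<^sub>N\<close> gives the cubic Bernoulli
  sum; on the right, the coefficients \<open>N!\<close>, \<open>N! * harm N\<close> and \<open>N! * harm2 N\<close> of
  \<open>pochhammer (y + 1) N\<close> give the three other sums. The multiples of \<open>B\<^sub>2\<^sub>n\<^sub>-\<^sub>2\<close> come from
  \<open>B\<^sub>1 = -1/2\<close> and from the coefficients of \<open>y^2\<close> and \<open>y^3\<close> in \<open>\<lambda>\<^sub>N\<close>.
\<close>

unbundle no vec_syntax
notation fps_nth (infixl \<open>$\<close> 75)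

section \<open>Formal power series\<close>

lemma fps_linear_ode_unique:
  fixes F G A :: "'a::{idom, ring_char_0} fps"
  assumes "fps_deriv F = A * F" "fps_deriv G = A * G" "F $ 0 = G $ 0"
  shows "F = G"
proof -
  define D where "D = F - G"
  have deriv_D: "fps_deriv D = A * D"
    using assms by (simp add: D_def algebra_simps)
  have "D $ n = 0" for n
  proof (induction n rule: less_induct)
    case (less n)
    show ?case
    proof (cases n)
      case 0
      thus ?thesis using assms by (simp add: D_def)
    next
      case (Suc k)
      have "of_nat (Suc k) * D $ Suc k = (A * D) $ k"
        using arg_cong[OF deriv_D, of "\<lambda>f. f $ k"] by simp
      also have "\<dots> = 0"
        using less Suc by (auto simp: fps_mult_nth intro!: sum.neutral)
      finally show ?thesis
        using Suc by (simp del: of_nat_Suc)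
    qed
  qed
  thus ?thesis by (simp add: D_def fps_eq_iff)
qed

text \<open>Logarithmic differentiation of \<open>V * Z = W\<close>: \<open>V'/V = W'/W - Z'/Z\<close>.\<close>

lemma fps_deriv_eq_mult_of_factor:
  fixes V W Z L M :: "'a::idom fps"
  assumes "V * Z = W" "Z \<noteq> 0"
    and "(fps_deriv M - fps_deriv L) * Z = - fps_deriv Z"
    and "fps_deriv W = fps_deriv L * W"
  shows "fps_deriv V = fps_deriv M * V"
proof -
  have "fps_deriv V * Z = fps_deriv (V * Z) - V * fps_deriv Z"
    by (simp add: algebra_simps)
  also have "\<dots> = fps_deriv L * (V * Z) + V * ((fps_deriv M - fps_deriv L) * Z)"
    unfolding assms(1,3,4) by simp
  also have "\<dots> = fps_deriv M * V * Z"
    by (simp add: algebra_simps)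
  finally show ?thesis
    using assms(2) by simp
qed

definition fps_even :: "'a::zero fps \<Rightarrow> bool" where
  "fps_even f \<longleftrightarrow> (\<forall>i. odd i \<longrightarrow> f $ i = 0)"

definition fps_even_part :: "'a::zero fps \<Rightarrow> 'a fps" where
  "fps_even_part f = Abs_fps (\<lambda>i. if even i then f $ i else 0)"

lemma fps_even_fps_even_part: "fps_even (fps_even_part f)"
  by (simp add: fps_even_def fps_even_part_def)

lemma fps_even_part_nth_even: "even i \<Longrightarrow> fps_even_part f $ i = f $ i"
  by (simp add: fps_even_part_def)

lemma fps_even_mult:
  fixes f g :: "'a::comm_semiring_0 fps"
  assumes "fps_even f" "fps_even g"
  shows "fps_even (f * g)"
  unfolding fps_even_def
proof (intro allI impI)
  fix i :: nat
  assume "odd i"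
  have "f $ j * g $ (i - j) = 0" if "j \<le> i" for j
    using assms \<open>odd i\<close> that unfolding fps_even_def by (cases "even j") auto
  thus "(f * g) $ i = 0"
    by (simp add: fps_mult_nth)
qed

lemma fps_eq_even_part_plus_linear:
  fixes f :: "'a::comm_ring_1 fps"
  assumes "\<And>i. odd i \<Longrightarrow> i \<noteq> 1 \<Longrightarrow> f $ i = 0"
  shows "f = fps_even_part f + fps_const (f $ 1) * fps_X"
proof (rule fps_ext)
  fix i
  show "f $ i = (fps_even_part f + fps_const (f $ 1) * fps_X) $ i"
    using assms[of i] by (cases "i = 1") (auto simp: fps_even_part_def fps_X_def)
qed

lemma fps_even_plus_linear_cube_nth:
  fixes f :: "'a::comm_ring_1 fps"
  assumes "fps_even f" "n \<ge> 1"
  shows "((f + fps_const c * fps_X) ^ 3) $ (2 * n) = (f ^ 3) $ (2 * n) + 3 * c\<^sup>2 * f $ (2 * n - 2)"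
proof -
  define C where "C = fps_const c"
  have "(f + C * fps_X) ^ 3
      = f ^ 3 + 3 * C * (fps_X * f\<^sup>2) + 3 * C\<^sup>2 * (fps_X\<^sup>2 * f) + C ^ 3 * fps_X ^ 3"
    by (simp add: power3_eq_cube power2_eq_square algebra_simps numeral_3_eq_3 numeral_2_eq_2)
  moreover have "(f\<^sup>2) $ (2 * n - 1) = 0"
    using fps_even_mult[OF assms(1) assms(1)] assms(2)
    unfolding fps_even_def power2_eq_square by simp
  moreover have "2 * n \<noteq> 3"
    by presburger
  ultimately show ?thesis
    using assms(2) by (simp add: C_def numeral_fps_const fps_X_power_mult_nth fps_X_power_nth)
qed

lemma fps_even_plus_linear_square_nth:
  fixes f :: "'a::comm_ring_1 fps"
  assumes "fps_even f" "n \<ge> 2"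
  shows "((f + fps_const c * fps_X) ^ 2) $ (2 * n) = (f ^ 2) $ (2 * n)"
proof -
  define C where "C = fps_const c"
  have "(f + C * fps_X) ^ 2 = f ^ 2 + 2 * C * (fps_X * f) + C\<^sup>2 * fps_X\<^sup>2"
    by (simp add: power2_eq_square algebra_simps numeral_2_eq_2)
  moreover have "f $ (2 * n - 1) = 0"
    using assms unfolding fps_even_def by simp
  ultimately show ?thesis
    using assms(2) by (simp add: C_def numeral_fps_const fps_X_power_nth)
qed

lemma fps_cube_nth:
  fixes f :: "'a::comm_semiring_1 fps"
  shows "(f ^ 3) $ N = (\<Sum>(a, b, c)\<in>{(a, b, c). a + b + c = N}. f $ a * f $ b * f $ c)"
proof -
  have "(f ^ 3) $ N = (\<Sum>a=0..N. \<Sum>b=0..N - a. f $ a * f $ b * f $ (N - a - b))"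
    by (simp add: power3_eq_cube fps_mult_nth sum_distrib_left mult.assoc)
  also have "\<dots> = (\<Sum>(a, b)\<in>Sigma {0..N} (\<lambda>a. {0..N - a}). f $ a * f $ b * f $ (N - a - b))"
    by (rule sum.Sigma) auto
  also have "\<dots> = (\<Sum>(a, b, c)\<in>{(a, b, c). a + b + c = N}. f $ a * f $ b * f $ c)"
    by (rule sum.reindex_bij_witness[where i = "\<lambda>(a, b, c). (a, b)"
          and j = "\<lambda>(a, b). (a, b, N - a - b)"]) auto
  finally show ?thesis .
qed

lemma fps_even_cube_nth:
  fixes f :: "'a::comm_semiring_1 fps"
  assumes "fps_even f" "f $ 0 = 0"
  shows "(f ^ 3) $ (2 * n) = (\<Sum>(k, l, m)\<in>comp3 n. f $ (2 * k) * f $ (2 * l) * f $ (2 * m))"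
proof -
  let ?S = "{(a, b, c). a + b + c = 2 * n}" and ?double = "\<lambda>(k, l, m). (2 * k, 2 * l, 2 * m)"
  have "?S \<subseteq> {0..2 * n} \<times> {0..2 * n} \<times> {0..2 * n}"
    by auto
  hence fin: "finite ?S"
    by (rule finite_subset) simp
  have vanish: "f $ a * f $ b * f $ c = 0" if "a + b + c = 2 * n" "(a, b, c) \<notin> ?double ` comp3 n"
    for a b c
  proof (rule ccontr)
    assume "f $ a * f $ b * f $ c \<noteq> 0"
    hence "f $ a \<noteq> 0" "f $ b \<noteq> 0" "f $ c \<noteq> 0"
      by auto
    hence "even a" "even b" "even c" "a \<noteq> 0" "b \<noteq> 0" "c \<noteq> 0"
      using assms unfolding fps_even_def by auto
    hence "(a, b, c) \<in> ?double ` comp3 n"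
      using that(1) by (intro image_eqI[where x = "(a div 2, b div 2, c div 2)"])
        (auto simp: comp3_def elim!: evenE)
    thus False using that(2) by simp
  qed
  have "(f ^ 3) $ (2 * n) = (\<Sum>(a, b, c)\<in>?double ` comp3 n. f $ a * f $ b * f $ c)"
    unfolding fps_cube_nth using fin vanish
    by (intro sum.mono_neutral_right) (auto simp: comp3_def)
  also have "\<dots> = (\<Sum>(k, l, m)\<in>comp3 n. f $ (2 * k) * f $ (2 * l) * f $ (2 * m))"
    by (subst sum.reindex) (auto simp: inj_on_def intro!: sum.cong)
  finally show ?thesis .
qed

lemma fps_even_square_nth:
  fixes f :: "'a::comm_semiring_1 fps"
  assumes "fps_even f" "f $ 0 = 0"
  shows "(f ^ 2) $ (2 * n) = (\<Sum>k=1..n - 1. f $ (2 * k) * f $ (2 * n - 2 * k))"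
proof -
  have vanish: "f $ a * f $ (2 * n - a) = 0" if "a \<le> 2 * n" "a \<notin> (\<lambda>k. 2 * k) ` {1..n - 1}" for a
  proof (rule ccontr)
    assume "f $ a * f $ (2 * n - a) \<noteq> 0"
    hence "f $ a \<noteq> 0" "f $ (2 * n - a) \<noteq> 0"
      by auto
    hence "even a" "a \<noteq> 0" "2 * n - a \<noteq> 0"
      using assms unfolding fps_even_def by auto
    hence "a \<in> (\<lambda>k. 2 * k) ` {1..n - 1}"
      using that(1) by (intro image_eqI[where x = "a div 2"]) auto
    thus False using that(2) by simp
  qed
  have "(f ^ 2) $ (2 * n) = (\<Sum>a\<in>(\<lambda>k. 2 * k) ` {1..n - 1}. f $ a * f $ (2 * n - a))"
    unfolding power2_eq_square fps_mult_nth using vanish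
    by (intro sum.mono_neutral_right) auto
  also have "\<dots> = (\<Sum>k=1..n - 1. f $ (2 * k) * f $ (2 * n - 2 * k))"
    by (subst sum.reindex) (auto simp: inj_on_def)
  finally show ?thesis .
qed

lemma fps_cube_nth_odd_vanishing:
  fixes f :: "'a::comm_ring_1 fps"
  assumes "\<And>i. odd i \<Longrightarrow> i \<noteq> 1 \<Longrightarrow> f $ i = 0" "f $ 0 = 0" "n \<ge> 1"
  shows "(f ^ 3) $ (2 * n) = (\<Sum>(k, l, m)\<in>comp3 n. f $ (2 * k) * f $ (2 * l) * f $ (2 * m))
    + 3 * (f $ 1)\<^sup>2 * f $ (2 * n - 2)"
proof -
  define E c where "E = fps_even_part f" and "c = f $ 1"
  have "f = E + fps_const c * fps_X"
    unfolding E_def c_def using assms(1) by (rule fps_eq_even_part_plus_linear)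
  hence "(f ^ 3) $ (2 * n) = ((E + fps_const c * fps_X) ^ 3) $ (2 * n)"
    by simp
  also have "\<dots> = (E ^ 3) $ (2 * n) + 3 * c\<^sup>2 * E $ (2 * n - 2)"
    unfolding E_def by (rule fps_even_plus_linear_cube_nth[OF fps_even_fps_even_part assms(3)])
  also have "(E ^ 3) $ (2 * n) = (\<Sum>(k, l, m)\<in>comp3 n. f $ (2 * k) * f $ (2 * l) * f $ (2 * m))"
  proof -
    have "fps_even_part f $ 0 = 0"
      using assms(2) by (simp add: fps_even_part_def)
    thus ?thesis
      unfolding E_def by (simp add: fps_even_cube_nth[OF fps_even_fps_even_part] fps_even_part_nth_even)
  qed
  finally show ?thesis
    by (simp add: E_def c_def fps_even_part_nth_even)
qed

lemma fps_square_nth_odd_vanishing: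
  fixes f :: "'a::comm_ring_1 fps"
  assumes "\<And>i. odd i \<Longrightarrow> i \<noteq> 1 \<Longrightarrow> f $ i = 0" "f $ 0 = 0" "n \<ge> 2"
  shows "(f ^ 2) $ (2 * n) = (\<Sum>k=1..n - 1. f $ (2 * k) * f $ (2 * n - 2 * k))"
proof -
  define E c where "E = fps_even_part f" and "c = f $ 1"
  have "f = E + fps_const c * fps_X"
    unfolding E_def c_def using assms(1) by (rule fps_eq_even_part_plus_linear)
  hence "(f ^ 2) $ (2 * n) = ((E + fps_const c * fps_X) ^ 2) $ (2 * n)"
    by simp
  also have "\<dots> = (E ^ 2) $ (2 * n)"
    unfolding E_def by (rule fps_even_plus_linear_square_nth[OF fps_even_fps_even_part assms(3)])
  also have "\<dots> = (\<Sum>k=1..n - 1. f $ (2 * k) * f $ (2 * n - 2 * k))"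
    using assms(2) unfolding E_def
    by (simp add: fps_even_square_nth[OF fps_even_fps_even_part] fps_even_part_nth_even)
  finally show ?thesis .
qed

section \<open>Power series with polynomial coefficients\<close>

lemma poly_eqI_of_nat:
  fixes p q :: "'a::{idom, ring_char_0} poly"
  assumes "\<And>m. poly p (of_nat m) = poly q (of_nat m)"
  shows "p = q"
proof (rule ccontr)
  assume "p \<noteq> q"
  hence "finite {x. poly (p - q) x = 0}"
    by (intro poly_roots_finite) simp
  moreover have "range (of_nat :: nat \<Rightarrow> 'a) \<subseteq> {x. poly (p - q) x = 0}"
    using assms by auto
  ultimately have "finite (range (of_nat :: nat \<Rightarrow> 'a))"
    by (rule finite_subset[rotated])
  moreover have "infinite (range (of_nat :: nat \<Rightarrow> 'a))"
    by (rule range_inj_infinite) (rule inj_of_nat)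
  ultimately show False
    by contradiction
qed

definition fps_poly_eval :: "'a \<Rightarrow> 'a::comm_semiring_1 poly fps \<Rightarrow> 'a fps" where
  "fps_poly_eval y F = Abs_fps (\<lambda>n. poly (F $ n) y)"

definition fps_poly_coeff :: "nat \<Rightarrow> 'a::comm_semiring_1 poly fps \<Rightarrow> 'a fps" where
  "fps_poly_coeff j F = Abs_fps (\<lambda>n. coeff (F $ n) j)"

lemma fps_poly_eval_nth [simp]: "fps_poly_eval y F $ n = poly (F $ n) y"
  by (simp add: fps_poly_eval_def)

lemma fps_poly_coeff_nth [simp]: "fps_poly_coeff j F $ n = coeff (F $ n) j"
  by (simp add: fps_poly_coeff_def)

lemma fps_poly_eval_mult: "fps_poly_eval y (F * G) = fps_poly_eval y F * fps_poly_eval y G"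
  by (rule fps_ext) (simp add: fps_mult_nth poly_sum)

lemma fps_poly_eval_power: "fps_poly_eval y (F ^ k) = fps_poly_eval y F ^ k"
proof (induction k)
  case 0
  show ?case by (rule fps_ext) simp
qed (simp add: fps_poly_eval_mult)

lemma fps_poly_coeff_mult:
  "fps_poly_coeff j (F * G) = (\<Sum>i\<le>j. fps_poly_coeff i F * fps_poly_coeff (j - i) G)"
proof (rule fps_ext)
  fix n
  have "fps_poly_coeff j (F * G) $ n
      = (\<Sum>a=0..n. \<Sum>i\<le>j. coeff (F $ a) i * coeff (G $ (n - a)) (j - i))"
    by (simp add: fps_mult_nth coeff_sum coeff_mult)
  also have "\<dots> = (\<Sum>i\<le>j. \<Sum>a=0..n. coeff (F $ a) i * coeff (G $ (n - a)) (j - i))"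
    by (rule sum.swap)
  finally show "fps_poly_coeff j (F * G) $ n
      = (\<Sum>i\<le>j. fps_poly_coeff i F * fps_poly_coeff (j - i) G) $ n"
    by (simp add: fps_mult_nth fps_sum_nth)
qed

lemma fps_poly_coeff_power_eq_0:
  assumes "fps_poly_coeff 0 F = 0" "j < k"
  shows "fps_poly_coeff j (F ^ k) = 0"
  using assms(2)
proof (induction k arbitrary: j)
  case (Suc k)
  have "fps_poly_coeff i F * fps_poly_coeff (j - i) (F ^ k) = 0" if "i \<le> j" for i
    using assms(1) Suc that by (cases "i = 0") auto
  thus ?case
    by (simp add: fps_poly_coeff_mult)
qed simp

lemma sum_atMost_3: "(\<Sum>i\<le>(3::nat). f i) = f 0 + f 1 + f 2 + (f 3 :: 'a::comm_monoid_add)"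
  by (simp add: numeral_3_eq_3 numeral_2_eq_2 add.assoc)

lemma fps_poly_coeff_3_square:
  assumes "fps_poly_coeff 0 F = 0"
  shows "fps_poly_coeff 3 (F ^ 2) = 2 * (fps_poly_coeff 1 F * fps_poly_coeff 2 F)"
  using assms by (simp add: power2_eq_square fps_poly_coeff_mult sum_atMost_3 mult_2 mult.commute)

lemma fps_poly_coeff_3_cube:
  assumes "fps_poly_coeff 0 F = 0"
  shows "fps_poly_coeff 3 (F ^ 3) = fps_poly_coeff 1 F ^ 3"
proof -
  have "fps_poly_coeff 3 (F ^ 3) = fps_poly_coeff 3 (F * F ^ 2)"
    by (simp only: power3_eq_cube power2_eq_square mult.assoc)
  also have "\<dots> = fps_poly_coeff 1 F * fps_poly_coeff 2 (F ^ 2)"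
    using assms fps_poly_coeff_power_eq_0[OF assms, of _ 2]
    by (simp add: fps_poly_coeff_mult sum_atMost_3)
  also have "fps_poly_coeff 2 (F ^ 2) = fps_poly_coeff 1 F ^ 2"
    using assms by (simp add: power2_eq_square fps_poly_coeff_mult numeral_2_eq_2)
  finally show ?thesis
    by (simp add: power3_eq_cube power2_eq_square mult.assoc)
qed

definition fps_poly_exp :: "'a::field_char_0 poly fps \<Rightarrow> 'a poly fps" where
  "fps_poly_exp F = Abs_fps (\<lambda>N. \<Sum>k=0..N. smult (1 / fact k) ((F ^ k) $ N))"

lemma fps_poly_eval_exp: "fps_poly_eval y (fps_poly_exp F) = fps_exp 1 oo fps_poly_eval y F"
  by (rule fps_ext)
    (simp add: fps_poly_exp_def fps_compose_nth poly_sum fps_poly_eval_power[symmetric])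

lemma fps_poly_coeff_3_exp:
  assumes "fps_poly_coeff 0 F = 0" "N \<ge> 3"
  shows "fps_poly_coeff 3 (fps_poly_exp F) $ N
    = fps_poly_coeff 3 F $ N + (fps_poly_coeff 1 F * fps_poly_coeff 2 F) $ N
      + (fps_poly_coeff 1 F ^ 3) $ N / 6"
proof -
  have "fps_poly_coeff 3 (fps_poly_exp F) $ N = (\<Sum>k=0..N. fps_poly_coeff 3 (F ^ k) $ N / fact k)"
    by (simp add: fps_poly_exp_def coeff_sum)
  also have "\<dots> = (\<Sum>k=0..3. fps_poly_coeff 3 (F ^ k) $ N / fact k)"
    using assms fps_poly_coeff_power_eq_0[OF assms(1)]
    by (intro sum.mono_neutral_right) auto
  also have "\<dots> = fps_poly_coeff 3 F $ N + fps_poly_coeff 3 (F ^ 2) $ N / 2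
      + fps_poly_coeff 3 (F ^ 3) $ N / 6"
    using assms(2) by (simp add: numeral_3_eq_3 numeral_2_eq_2 fact_numeral)
  finally show ?thesis
    using assms(1) by (simp add: fps_poly_coeff_3_square fps_poly_coeff_3_cube numeral_fps_const)
qed

section \<open>Sums over compositions and harmonic numbers\<close>

lemma sum_comp3_times_last:
  fixes g :: "nat \<Rightarrow> real"
  shows "(\<Sum>(k, l, m)\<in>comp3 n. g k * g l * g m * real m)
    = real n / 3 * (\<Sum>(k, l, m)\<in>comp3 n. g k * g l * g m)"
proof -
  let ?S = "\<lambda>h. \<Sum>(k, l, m)\<in>comp3 n. g k * g l * g m * real (h k l m)"
  have "?S (\<lambda>k l m. m) = ?S (\<lambda>k l m. k)"
    by (rule sum.reindex_bij_witness[where i = "\<lambda>(k, l, m). (m, l, k)"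
          and j = "\<lambda>(k, l, m). (m, l, k)"]) (auto simp: comp3_def)
  moreover have "?S (\<lambda>k l m. m) = ?S (\<lambda>k l m. l)"
    by (rule sum.reindex_bij_witness[where i = "\<lambda>(k, l, m). (k, m, l)"
          and j = "\<lambda>(k, l, m). (k, m, l)"]) (auto simp: comp3_def)
  moreover have "?S (\<lambda>k l m. k) + ?S (\<lambda>k l m. l) + ?S (\<lambda>k l m. m)
      = real n * (\<Sum>(k, l, m)\<in>comp3 n. g k * g l * g m)"
    unfolding sum.distrib[symmetric] sum_distrib_left
    by (rule sum.cong) (auto simp: comp3_def algebra_simps)
  ultimately show ?thesis
    by simp
qed

lemma comp3_multinom3_sum:
  fixes a :: "nat \<Rightarrow> real"
  assumes "n \<ge> 1"
  defines "w \<equiv> \<lambda>k. a k / (real k * fact k)"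
  shows "3 / (2 * real n) * (\<Sum>(k, l, m)\<in>comp3 n. a (2 * k) * a (2 * l) * a (2 * m)
      / (real (2 * k) * real (2 * l)) * multinom3 (2 * n) (2 * k) (2 * l) (2 * m))
    = fact (2 * n) * (\<Sum>(k, l, m)\<in>comp3 n. w (2 * k) * w (2 * l) * w (2 * m))"
proof -
  let ?g = "\<lambda>k. w (2 * k)"
  have "(\<Sum>(k, l, m)\<in>comp3 n. a (2 * k) * a (2 * l) * a (2 * m)
      / (real (2 * k) * real (2 * l)) * multinom3 (2 * n) (2 * k) (2 * l) (2 * m))
      = (\<Sum>(k, l, m)\<in>comp3 n. 2 * fact (2 * n) * (?g k * ?g l * ?g m * real m))"
  proof (rule sum.cong[OF refl], clarify)
    fix k l m
    assume "(k, l, m) \<in> comp3 n"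
    hence "k \<ge> 1" "l \<ge> 1" "m \<ge> 1"
      by (auto simp: comp3_def)
    thus "a (2 * k) * a (2 * l) * a (2 * m) / (real (2 * k) * real (2 * l))
        * multinom3 (2 * n) (2 * k) (2 * l) (2 * m)
      = 2 * fact (2 * n) * (?g k * ?g l * ?g m * real m)"
      by (simp add: w_def multinom3_def field_simps)
  qed
  also have "\<dots> = 2 * fact (2 * n) * (\<Sum>(k, l, m)\<in>comp3 n. ?g k * ?g l * ?g m * real m)"
    by (simp add: sum_distrib_left case_prod_beta)
  also have "\<dots> = 2 * fact (2 * n) * (real n / 3 * (\<Sum>(k, l, m)\<in>comp3 n. ?g k * ?g l * ?g m))"
    by (simp only: sum_comp3_times_last)
  finally show ?thesis
    using assms(1) by (simp add: field_simps)
qed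

lemma sum_binomial_double:
  fixes a :: "nat \<Rightarrow> real"
  defines "w \<equiv> \<lambda>k. a k / (real k * fact k)"
  shows "(\<Sum>k=1..n - 1. real ((2 * n) choose (2 * k)) * a (2 * k) * a (2 * n - 2 * k) / real (2 * k))
    = real n * fact (2 * n) * (\<Sum>k=1..n - 1. w (2 * k) * w (2 * n - 2 * k))"
proof -
  define p where "p k = fact (2 * n) * (w (2 * k) * w (2 * n - 2 * k))" for k
  have summand: "real ((2 * n) choose (2 * k)) * a (2 * k) * a (2 * n - 2 * k) / real (2 * k)
      = p k * real (2 * n - 2 * k)" if "k \<in> {1..n - 1}" for k
  proof -
    have "k < n"
      using that by auto
    define r1 r2 f1 f2 where "r1 = real (2 * k)" and "r2 = real (2 * n - 2 * k)"
      and "f1 = (fact (2 * k) :: real)" and "f2 = (fact (2 * n - 2 * k) :: real)"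
    have "r1 \<noteq> 0" "r2 \<noteq> 0" "f1 \<noteq> 0" "f2 \<noteq> 0"
      using that \<open>k < n\<close> by (auto simp: r1_def r2_def f1_def f2_def)
    moreover have binom: "real ((2 * n) choose (2 * k)) = fact (2 * n) / (f1 * f2)"
      using \<open>k < n\<close> by (simp add: binomial_fact f1_def f2_def)
    ultimately show ?thesis
      unfolding p_def w_def binom r1_def[symmetric] r2_def[symmetric] f1_def[symmetric] f2_def[symmetric]
      by (simp add: field_simps)
  qed
  have reflect: "(\<Sum>k=1..n - 1. p k * real (2 * n - 2 * k)) = (\<Sum>k=1..n - 1. p k * real (2 * k))"
  proof (rule sum.reindex_bij_witness[where i = "\<lambda>k. n - k" and j = "\<lambda>k. n - k"])
    fix k
    assume "k \<in> {1..n - 1}"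
    hence "2 * (n - k) = 2 * n - 2 * k" "2 * n - 2 * (n - k) = 2 * k"
      by auto
    thus "p (n - k) * real (2 * (n - k)) = p k * real (2 * n - 2 * k)"
      by (simp add: p_def mult.commute)
  qed auto
  have "2 * (\<Sum>k=1..n - 1. p k * real (2 * n - 2 * k))
      = (\<Sum>k=1..n - 1. p k * (real (2 * n - 2 * k) + real (2 * k)))"
    by (simp only: distrib_left sum.distrib reflect[symmetric] mult_2[where 'a = real])
  also have "\<dots> = (\<Sum>k=1..n - 1. p k * (2 * real n))"
    by (rule sum.cong) (auto simp flip: of_nat_add)
  also have "\<dots> = (\<Sum>k=1..n - 1. p k) * (2 * real n)"
    by (simp only: sum_distrib_right)
  finally have "(\<Sum>k=1..n - 1. p k * real (2 * n - 2 * k)) = real n * (\<Sum>k=1..n - 1. p k)"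
    by (simp add: algebra_simps)
  moreover have "(\<Sum>k=1..n - 1. real ((2 * n) choose (2 * k)) * a (2 * k) * a (2 * n - 2 * k) / real (2 * k))
      = (\<Sum>k=1..n - 1. p k * real (2 * n - 2 * k))"
    using summand by (rule sum.cong[OF refl])
  ultimately show ?thesis
    by (simp add: p_def sum_distrib_left mult_ac)
qed

lemma poly_pochhammer_shift: "poly (pochhammer [:1, 1:] N) y = pochhammer (y + 1) N"
  by (induction N) (simp_all add: pochhammer_Suc algebra_simps)

lemma pochhammer_shift_Suc:
  "pochhammer [:1, 1:] (Suc N)
    = smult (real N + 1) (pochhammer [:1, 1:] N) + pCons 0 (pochhammer [:1, 1:] N)"
proof -
  have "poly (pochhammer [:1, 1:] (Suc N))
      = poly (smult (real N + 1) (pochhammer [:1, 1:] N) + pCons 0 (pochhammer [:1, 1:] N))"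
    by (rule ext) (simp add: poly_pochhammer_shift pochhammer_Suc algebra_simps)
  thus ?thesis
    by (simp add: poly_eq_poly_eq_iff)
qed

lemma coeff_pochhammer_shift_0: "coeff (pochhammer [:1, 1::real:] N) 0 = fact N"
proof (induction N)
  case (Suc N)
  thus ?case
    unfolding pochhammer_shift_Suc coeff_add coeff_smult coeff_pCons_0 by (simp add: algebra_simps)
qed simp

lemma coeff_pochhammer_shift_1: "coeff (pochhammer [:1, 1::real:] N) 1 = fact N * harm N"
proof (induction N)
  case (Suc N)
  have "coeff (pochhammer [:1, 1:] (Suc N)) 1 = (real N + 1) * (fact N * harm N) + fact N"
    using Suc unfolding pochhammer_shift_Suc coeff_add coeff_smult One_nat_def coeff_pCons_Suc
    by (simp add: coeff_pochhammer_shift_0)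
  also have "\<dots> = fact (Suc N) * harm (Suc N)"
    by (simp add: harm_Suc field_simps)
  finally show ?case .
qed (simp add: harm_def)

lemma harm2_Suc: "harm2 (Suc N) = harm2 N + harm N / real (Suc N)"
proof -
  let ?S = "\<lambda>N::nat. {(i, j). 1 \<le> i \<and> i < j \<and> j \<le> N}"
  have "?S N \<subseteq> {1..N} \<times> {1..N}"
    by auto
  hence fin: "finite (?S N)"
    by (rule finite_subset) simp
  have "?S (Suc N) = ?S N \<union> (\<lambda>i. (i, Suc N)) ` {1..N}"
    by auto
  hence "harm2 (Suc N) = (\<Sum>(i, j)\<in>?S N \<union> (\<lambda>i. (i, Suc N)) ` {1..N}. 1 / (real i * real j))"
    unfolding harm2_def by simp
  also have "\<dots> = harm2 N + (\<Sum>(i, j)\<in>(\<lambda>i. (i, Suc N)) ` {1..N}. 1 / (real i * real j))"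
    unfolding harm2_def using fin by (intro sum.union_disjoint) auto
  also have "(\<Sum>(i, j)\<in>(\<lambda>i. (i, Suc N)) ` {1..N}. 1 / (real i * real j))
      = (\<Sum>i=1..N. 1 / (real i * real (Suc N)))"
    by (subst sum.reindex) (auto simp: inj_on_def)
  also have "\<dots> = harm N / real (Suc N)"
    by (simp add: harm_def sum_divide_distrib field_simps del: of_nat_Suc)
  finally show ?thesis .
qed

lemma coeff_pochhammer_shift_2: "coeff (pochhammer [:1, 1::real:] N) 2 = fact N * harm2 N"
proof (induction N)
  case 0
  have no_pairs: "{(i, j). 1 \<le> i \<and> i < j \<and> j \<le> (0::nat)} = {}"
    by auto
  show ?case
    unfolding harm2_def no_pairs by simp
next
  case (Suc N)
  have "coeff (pochhammer [:1, 1:] (Suc N)) 2 = (real N + 1) * (fact N * harm2 N) + fact N * harm N"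
    using Suc coeff_pochhammer_shift_1[of N]
    unfolding pochhammer_shift_Suc coeff_add coeff_smult numeral_2_eq_2 One_nat_def coeff_pCons_Suc
    by simp
  also have "\<dots> = fact (Suc N) * harm2 (Suc N)"
    by (simp add: harm2_Suc field_simps)
  finally show ?case .
qed

section \<open>Bernoulli numbers and power sums\<close>

definition bernoulli_fps :: "real fps" where
  "bernoulli_fps = fps_X / (fps_exp 1 - 1)"

lemma bernoulli_fps_nth: "bernoulli_fps $ n = bernoulli n / fact n"
  by (simp add: bernoulli_fps_def bernoulli_def)

lemma fps_exp_minus_one_nonzero: "fps_exp (1::real) - 1 \<noteq> 0"
proof
  assume "fps_exp (1::real) - 1 = 0"
  hence "(fps_exp (1::real) - 1) $ 1 = 0" by simp
  thus False by simp
qed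

lemma bernoulli_fps_mult_exp: "bernoulli_fps * (fps_exp 1 - 1) = fps_X"
proof -
  have "subdegree (fps_exp (1::real) - 1) = 1" by (rule subdegreeI) auto
  hence "(fps_exp (1::real) - 1) dvd fps_X"
    using fps_dvd_iff[OF fps_exp_minus_one_nonzero, of fps_X] by simp
  thus ?thesis unfolding bernoulli_fps_def by simp
qed

lemma bernoulli_0: "bernoulli 0 = 1"
proof -
  have "(bernoulli_fps * (fps_exp 1 - 1)) $ 1 = 1" by (simp add: bernoulli_fps_mult_exp)
  thus ?thesis by (simp add: fps_mult_nth bernoulli_fps_nth)
qed

lemma bernoulli_1: "bernoulli 1 = -1/2"
proof -
  have "(bernoulli_fps * (fps_exp 1 - 1)) $ 2 = 0" by (simp add: bernoulli_fps_mult_exp)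
  hence "bernoulli_fps $ 0 / 2 + bernoulli_fps $ 1 = 0"
    by (simp add: fps_mult_nth numeral_2_eq_2 atLeast0_atMost_Suc)
  thus ?thesis by (simp add: bernoulli_fps_nth bernoulli_0)
qed

lemma bernoulli_fps_reflect: "bernoulli_fps oo - fps_X = fps_X + bernoulli_fps"
proof -
  let ?B = bernoulli_fps and ?E = "fps_exp (1::real)"
  let ?R = "?B oo - fps_X"
  have "?R * (fps_exp (-1) - 1) = - fps_X"
    using arg_cong[OF bernoulli_fps_mult_exp, of "\<lambda>f. f oo - fps_X"]
    by (simp add: fps_compose_mult_distrib fps_compose_sub_distrib)
  hence "?R * ((fps_exp (-1) - 1) * ?E) = - fps_X * ?E"
    by (metis mult.assoc)
  moreover have "(fps_exp (-1) - 1) * ?E = - (?E - 1)"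
    by (simp add: algebra_simps flip: fps_exp_add_mult)
  ultimately have "?R * (1 - ?E) = - (fps_X * ?E)"
    by simp
  hence "?R * (?E - 1) = fps_X * ?E"
    by (metis minus_diff_eq mult_minus_right neg_equal_iff_equal)
  also have "\<dots> = fps_X * (?E - 1) + fps_X"
    by (simp add: algebra_simps)
  also have "\<dots> = fps_X * (?E - 1) + ?B * (?E - 1)"
    by (simp only: bernoulli_fps_mult_exp)
  also have "\<dots> = (fps_X + ?B) * (?E - 1)"
    by (simp add: distrib_right)
  finally show ?thesis
    using fps_exp_minus_one_nonzero by simp
qed

lemma bernoulli_odd_eq_0:
  assumes "odd n" "n \<noteq> 1"
  shows "bernoulli n = 0"
proof -
  have "(bernoulli_fps oo - fps_X) $ n = (fps_X + bernoulli_fps) $ n"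
    by (simp only: bernoulli_fps_reflect)
  hence "- bernoulli_fps $ n = bernoulli_fps $ n"
    using assms by (simp add: fps_compose_uminus')
  thus ?thesis by (simp add: bernoulli_fps_nth)
qed

definition bernoulli_poly :: "nat \<Rightarrow> real poly" where
  "bernoulli_poly n = (\<Sum>k\<le>n. monom (real (n choose k) * bernoulli k) (n - k))"

lemma coeff_bernoulli_poly:
  assumes "j \<le> n"
  shows "coeff (bernoulli_poly n) j = real (n choose j) * bernoulli (n - j)"
proof -
  have "coeff (bernoulli_poly n) j
      = (\<Sum>k\<le>n. if k = n - j then real (n choose k) * bernoulli k else 0)"
    unfolding bernoulli_poly_def coeff_sum
    by (intro sum.cong refl) (use assms in \<open>auto simp: coeff_monom\<close>)
  also have "\<dots> = real (n choose (n - j)) * bernoulli (n - j)"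
    by (simp add: sum.delta)
  finally show ?thesis
    using assms by (simp add: binomial_symmetric[symmetric])
qed

lemma bernoulli_fps_mult_exp_nth:
  "(bernoulli_fps * fps_exp y) $ n = poly (bernoulli_poly n) y / fact n"
proof -
  have "(bernoulli_fps * fps_exp y) $ n
      = (\<Sum>k\<le>n. bernoulli k / fact k * (y ^ (n - k) / fact (n - k)))"
    by (simp add: fps_mult_nth bernoulli_fps_nth atLeast0AtMost)
  also have "\<dots> = (\<Sum>k\<le>n. real (n choose k) * bernoulli k * y ^ (n - k)) / fact n"
    unfolding sum_divide_distrib
    by (intro sum.cong refl) (simp add: binomial_fact field_simps)
  finally show ?thesis
    by (simp add: bernoulli_poly_def poly_sum poly_monom)
qed

lemma bernoulli_poly_diff:
  assumes "n \<ge> 1"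
  shows "poly (bernoulli_poly n) (y + 1) - poly (bernoulli_poly n) y = real n * y ^ (n - 1)"
proof -
  have "bernoulli_fps * fps_exp (y + 1) - bernoulli_fps * fps_exp y
      = bernoulli_fps * (fps_exp 1 - 1) * fps_exp y"
    by (simp add: fps_exp_add_mult algebra_simps)
  also have "\<dots> = fps_X * fps_exp y"
    by (simp add: bernoulli_fps_mult_exp)
  finally have "(bernoulli_fps * fps_exp (y + 1) - bernoulli_fps * fps_exp y) $ n
      = (fps_X * fps_exp y) $ n"
    by simp
  hence "(poly (bernoulli_poly n) (y + 1) - poly (bernoulli_poly n) y) / fact n
      = y ^ (n - 1) / fact (n - 1)"
    using assms by (simp add: bernoulli_fps_mult_exp_nth diff_divide_distrib)
  hence "poly (bernoulli_poly n) (y + 1) - poly (bernoulli_poly n) y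
      = fact n * (y ^ (n - 1) / fact (n - 1))"
    by (simp add: field_simps)
  also have "\<dots> = real n * y ^ (n - 1)"
    using assms by (simp add: fact_reduce[of n])
  finally show ?thesis .
qed

text \<open>By Faulhaber's formula, the value of \<open>power_sum_poly N\<close> at \<open>m \<in> \<nat>\<close> is
  \<open>(\<Sum>j=1..m. (-j)^N) / N\<close>, the coefficient of \<open>t^N\<close> in \<open>-(\<Sum>j=1..m. ln (1 + j t))\<close>.\<close>

definition power_sum_poly :: "nat \<Rightarrow> real poly" where
  "power_sum_poly N = smult (- 1 / (real N * real (Suc N)))
     (pcompose (bernoulli_poly (Suc N)) [:0, -1:] - [:bernoulli (Suc N):])"

lemma poly_power_sum_poly:
  "poly (power_sum_poly N) y
    = (bernoulli (Suc N) - poly (bernoulli_poly (Suc N)) (- y)) / (real N * real (Suc N))"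
  by (simp add: power_sum_poly_def poly_pcompose) (metis minus_diff_eq minus_divide_left)

lemma power_sum_poly_diff:
  assumes "N \<ge> 1"
  shows "poly (power_sum_poly N) (y + 1) - poly (power_sum_poly N) y = (- (y + 1)) ^ N / real N"
proof -
  let ?P = "poly (bernoulli_poly (Suc N))"
  have "poly (power_sum_poly N) (y + 1) - poly (power_sum_poly N) y
      = (?P (- y) - ?P (- (y + 1))) / (real N * real (Suc N))"
    unfolding poly_power_sum_poly by (simp add: diff_divide_distrib)
  also have "?P (- y) - ?P (- (y + 1)) = real (Suc N) * (- (y + 1)) ^ N"
    using bernoulli_poly_diff[of "Suc N" "- (y + 1)"] by simp
  finally show ?thesis
    by (simp del: of_nat_Suc)
qed

lemma coeff_power_sum_poly_0: "coeff (power_sum_poly N) 0 = 0"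
proof -
  have "coeff (bernoulli_poly (Suc N)) 0 = bernoulli (Suc N)"
    by (simp add: coeff_bernoulli_poly)
  thus ?thesis
    by (simp add: power_sum_poly_def poly_0_coeff_0)
qed

lemma coeff_power_sum_poly:
  assumes "1 \<le> j" "j \<le> Suc N"
  shows "coeff (power_sum_poly N) j
    = - ((-1) ^ j * real (Suc N choose j) * bernoulli (Suc N - j)) / (real N * real (Suc N))"
proof -
  obtain i where "j = Suc i" using assms by (cases j) auto
  thus ?thesis
    using assms by (simp add: power_sum_poly_def coeff_pcompose_linear coeff_bernoulli_poly)
qed

lemma coeff_power_sum_poly_1: "coeff (power_sum_poly N) 1 = bernoulli N / real N"
proof (cases N)
  case (Suc M)
  thus ?thesis
    using coeff_power_sum_poly[of 1 N] by (simp del: of_nat_Suc)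
qed (simp add: power_sum_poly_def)

lemma coeff_power_sum_poly_2:
  assumes "N \<ge> 1"
  shows "coeff (power_sum_poly N) 2 = - bernoulli (N - 1) / 2"
proof -
  have "2 * (Suc N choose 2) = Suc N * N"
    using Suc_times_binomial[of 1 N] unfolding Suc_1 choose_one .
  hence "2 * real (Suc N choose 2) = real (Suc N) * real N"
    by (metis of_nat_mult of_nat_numeral)
  hence c: "real (Suc N choose 2) = real (Suc N) * real N / 2"
    by simp
  have "coeff (power_sum_poly N) 2
      = - (real (Suc N choose 2) * bernoulli (N - 1)) / (real N * real (Suc N))"
    using coeff_power_sum_poly[of 2 N] assms by simp
  also have "\<dots> = - bernoulli (N - 1) / 2"
    unfolding c using assms by simp
  finally show ?thesis .
qed

lemma coeff_power_sum_poly_3: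
  assumes "N \<ge> 2"
  shows "coeff (power_sum_poly N) 3 = real (N - 1) * bernoulli (N - 2) / 6"
proof -
  have "3 * (Suc N choose 3) = Suc N * (N choose 2)"
    using Suc_times_binomial[of 2 N] by (simp only: numeral_3_eq_3 numeral_2_eq_2)
  hence c3: "3 * real (Suc N choose 3) = real (Suc N) * real (N choose 2)"
    by (metis of_nat_mult of_nat_numeral)
  have "2 * (N choose 2) = N * (N - 1)"
    using binomial_absorption[of 1 N] unfolding Suc_1 choose_one .
  hence c2: "2 * real (N choose 2) = real N * real (N - 1)"
    by (metis of_nat_mult of_nat_numeral)
  have "6 * real (Suc N choose 3) = real (Suc N) * (2 * real (N choose 2))"
    using c3 by simp
  hence "6 * real (Suc N choose 3) = real (Suc N) * real N * real (N - 1)"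
    unfolding c2 by simp
  hence c: "real (Suc N choose 3) = real (Suc N) * real N * real (N - 1) / 6"
    by simp
  have "coeff (power_sum_poly N) 3
      = real (Suc N choose 3) * bernoulli (N - 2) / (real N * real (Suc N))"
    using coeff_power_sum_poly[of 3 N] assms by (simp del: binomial_Suc_Suc)
  also have "\<dots> = real (N - 1) * bernoulli (N - 2) / 6"
    unfolding c using assms by simp
  finally show ?thesis .
qed

section \<open>Two expansions of a product\<close>

definition Lambda :: "real poly fps" where
  "Lambda = Abs_fps power_sum_poly"

text \<open>The series \<open>(1 - exp (-x)) / x\<close>.\<close>

definition expq :: "real fps" where
  "expq = Abs_fps (\<lambda>N. (-1) ^ N / fact (Suc N))"

lemma expq_nth_0: "expq $ 0 = 1"
  by (simp add: expq_def)

lemma fps_X_mult_expq: "fps_X * expq = 1 - fps_exp (-1)"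
proof (rule fps_ext)
  fix N
  show "(fps_X * expq) $ N = (1 - fps_exp (-1)) $ N"
    by (cases N) (simp_all add: expq_def power_minus' ring_distribs)
qed

lemma fps_X_mult_deriv_expq: "fps_X * fps_deriv expq = 1 - fps_X * expq - expq"
proof -
  have "fps_X * fps_deriv expq + expq = fps_deriv (fps_X * expq)"
    by (simp add: algebra_simps)
  also have "\<dots> = fps_exp (-1)"
    unfolding fps_X_mult_expq by (simp flip: fps_const_neg)
  also have "\<dots> = 1 - fps_X * expq"
    by (simp add: fps_X_mult_expq)
  finally show ?thesis
    by (simp add: algebra_simps)
qed

text \<open>The coefficient of \<open>x^0\<close> is 0, since division by zero yields 0.\<close>

definition gamma_fps :: "real fps" where
  "gamma_fps = Abs_fps (\<lambda>N. bernoulli N / (real N * fact N))"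

lemma gamma_fps_nth: "gamma_fps $ i = bernoulli i / (real i * fact i)"
  by (simp add: gamma_fps_def)

lemma gamma_fps_nth_0: "gamma_fps $ 0 = 0"
  by (simp add: gamma_fps_nth)

lemma fps_X_mult_deriv_gamma: "fps_X * fps_deriv gamma_fps = bernoulli_fps - 1"
proof (rule fps_ext)
  fix N
  show "(fps_X * fps_deriv gamma_fps) $ N = (bernoulli_fps - 1) $ N"
    by (cases N) (simp_all add: gamma_fps_def bernoulli_fps_nth bernoulli_0 del: of_nat_Suc)
qed

text \<open>That is, \<open>expq = exp gamma_fps\<close>.\<close>

lemma deriv_expq: "fps_deriv expq = fps_deriv gamma_fps * expq"
proof -
  let ?F = "fps_exp (-1::real)"
  have B: "bernoulli_fps * (1 - ?F) = fps_X * ?F"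
  proof -
    have "bernoulli_fps * (1 - ?F) = bernoulli_fps * (fps_exp 1 - 1) * ?F"
      by (simp add: algebra_simps flip: fps_exp_add_mult)
    thus ?thesis
      by (simp add: bernoulli_fps_mult_exp)
  qed
  have "fps_X * (1 - fps_X * expq - bernoulli_fps * expq)
      = fps_X - fps_X * (fps_X * expq) - bernoulli_fps * (fps_X * expq)"
    by (simp add: algebra_simps)
  also have "\<dots> = 0"
    unfolding fps_X_mult_expq B by (simp add: algebra_simps)
  finally have one_minus: "1 - fps_X * expq = bernoulli_fps * expq"
    by simp
  have "fps_X * fps_deriv expq = (1 - fps_X * expq) - expq"
    by (simp add: fps_X_mult_deriv_expq)
  also have "\<dots> = (bernoulli_fps - 1) * expq"
    unfolding one_minus by (simp add: algebra_simps)
  also have "\<dots> = fps_X * (fps_deriv gamma_fps * expq)"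
    unfolding fps_X_mult_deriv_gamma[symmetric] by (simp add: mult.assoc)
  finally show ?thesis
    by simp
qed

lemma exp_of_nat_times_gamma_fps: "fps_exp 1 oo (fps_const (real m) * gamma_fps) = expq ^ m"
proof (rule fps_linear_ode_unique)
  let ?A = "fps_const (real m) * fps_deriv gamma_fps"
  have "(fps_const (real m) * gamma_fps) $ 0 = 0"
    by (simp add: gamma_fps_def)
  thus "fps_deriv (fps_exp 1 oo (fps_const (real m) * gamma_fps))
      = ?A * (fps_exp 1 oo (fps_const (real m) * gamma_fps))"
    by (simp add: fps_compose_deriv mult.commute)
  show "fps_deriv (expq ^ m) = ?A * expq ^ m"
  proof (cases m)
    case (Suc k)
    hence "fps_deriv (expq ^ m) = fps_const (real m) * fps_deriv expq * expq ^ k"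
      unfolding fps_deriv_power by simp
    also have "\<dots> = ?A * expq ^ m"
      using Suc by (simp add: deriv_expq algebra_simps)
    finally show ?thesis .
  qed simp
qed (simp add: expq_nth_0 fps_power_zeroth)

text \<open>By \<open>rising_expq_0\<close> and \<open>rising_expq_Suc\<close>,
  \<open>rising_expq m = (\<Prod>j=1..m. 1 / (1 + j t))\<close>.\<close>

definition rising_expq :: "nat \<Rightarrow> real fps" where
  "rising_expq m = Abs_fps (\<lambda>N. pochhammer (real m + 1) N * (expq ^ m) $ N)"

lemma rising_expq_0: "rising_expq 0 = 1"
  by (rule fps_ext) (simp add: rising_expq_def)

lemma expq_power_Suc_nth:
  fixes m N :: nat
  defines "s \<equiv> real (Suc m)"
  shows "(s + real N) * (expq ^ Suc m) $ N
    = s * ((expq ^ m) $ N - (if N = 0 then 0 else (expq ^ Suc m) $ (N - 1)))"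
proof -
  let ?a = "expq ^ Suc m" and ?c = "expq ^ m"
  have "fps_X * fps_deriv ?a = fps_const s * ?c * (fps_X * fps_deriv expq)"
    by (simp add: s_def fps_deriv_power ac_simps del: power_Suc)
  also have "\<dots> = fps_const s * (?c - fps_X * ?a - ?a)"
    by (simp add: fps_X_mult_deriv_expq algebra_simps)
  finally have "(fps_X * fps_deriv ?a) $ N = (fps_const s * (?c - fps_X * ?a - ?a)) $ N"
    by simp
  thus ?thesis
    by (cases N) (simp_all add: algebra_simps del: of_nat_Suc power_Suc)
qed

lemma rising_expq_Suc_nth:
  fixes m N :: nat
  defines "s \<equiv> real (Suc m)"
  shows "rising_expq (Suc m) $ N + s * (if N = 0 then 0 else rising_expq (Suc m) $ (N - 1))
    = rising_expq m $ N"
proof -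
  let ?u = "\<lambda>k. (expq ^ Suc m) $ k"
  have rec: "(s + real N) * ?u N = s * ((expq ^ m) $ N - (if N = 0 then 0 else ?u (N - 1)))"
    using expq_power_Suc_nth[of m N] by (simp add: s_def)
  have rising_m: "rising_expq m $ N = pochhammer s N * (expq ^ m) $ N"
    by (simp add: rising_expq_def s_def add.commute)
  have rising_Suc: "rising_expq (Suc m) $ k = pochhammer (s + 1) k * ?u k" for k
    by (simp add: rising_expq_def s_def)
  have poch: "s * pochhammer (s + 1) N = pochhammer s N * (s + real N)"
    using pochhammer_rec[of s N] pochhammer_Suc[of s N] by simp
  have "(s + real N) * (rising_expq (Suc m) $ N + s * (if N = 0 then 0 else rising_expq (Suc m) $ (N - 1)))
      = (s + real N) * rising_expq m $ N"
  proof (cases N)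
    case 0
    thus ?thesis using rec unfolding rising_m rising_Suc by (simp add: algebra_simps)
  next
    case (Suc k)
    have poch_Suc: "pochhammer (s + 1) N = pochhammer (s + 1) k * (s + real N)"
      using Suc pochhammer_Suc[of "s + 1" k] by (simp add: algebra_simps)
    have "(s + real N) * (rising_expq (Suc m) $ N + s * rising_expq (Suc m) $ k)
        = pochhammer (s + 1) N * ((s + real N) * ?u N) + s * pochhammer (s + 1) N * ?u k"
      unfolding rising_Suc poch_Suc by (simp add: algebra_simps)
    also have "\<dots> = s * pochhammer (s + 1) N * (expq ^ m) $ N"
      unfolding rec using Suc by (simp add: algebra_simps)
    also have "\<dots> = (s + real N) * rising_expq m $ N"
      unfolding poch rising_m by (simp add: algebra_simps)
    finally show ?thesis
      using Suc by simp
  qed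
  moreover have "s + real N \<noteq> 0"
    by (simp add: s_def add_pos_nonneg)
  ultimately show ?thesis
    by simp
qed

lemma rising_expq_Suc: "rising_expq (Suc m) * (1 + fps_const (real (Suc m)) * fps_X) = rising_expq m"
proof (rule fps_ext)
  fix N
  have "(rising_expq (Suc m) * (1 + fps_const (real (Suc m)) * fps_X)) $ N
      = rising_expq (Suc m) $ N
        + real (Suc m) * (if N = 0 then 0 else rising_expq (Suc m) $ (N - 1))"
    by (simp add: algebra_simps)
  also have "\<dots> = rising_expq m $ N"
    by (rule rising_expq_Suc_nth)
  finally show "(rising_expq (Suc m) * (1 + fps_const (real (Suc m)) * fps_X)) $ N
      = rising_expq m $ N" .
qed

text \<open>That is, \<open>\<Lambda>\<^sub>m\<^sub>+\<^sub>1 - \<Lambda>\<^sub>m = - ln (1 + (m + 1) t)\<close>,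
  where \<open>\<Lambda>\<^sub>m\<close> is \<open>Lambda\<close> evaluated at \<open>m\<close>.\<close>

lemma deriv_Lambda_eval_Suc:
  "(fps_deriv (fps_poly_eval (real (Suc m)) Lambda) - fps_deriv (fps_poly_eval (real m) Lambda))
     * (1 + fps_const (real (Suc m)) * fps_X) = - fps_const (real (Suc m))"
proof (rule fps_ext)
  fix N
  define s where "s = real m + 1"
  define d where
    "d = fps_deriv (fps_poly_eval (real (Suc m)) Lambda) - fps_deriv (fps_poly_eval (real m) Lambda)"
  have d_nth: "d $ k = (- s) ^ Suc k" for k
  proof -
    have "d $ k = real (Suc k) * (poly (power_sum_poly (Suc k)) (real m + 1)
        - poly (power_sum_poly (Suc k)) (real m))"
      by (simp add: d_def Lambda_def algebra_simps)
    also have "\<dots> = real (Suc k) * ((- s) ^ Suc k / real (Suc k))"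
      unfolding s_def by (subst power_sum_poly_diff) simp_all
    also have "\<dots> = (- s) ^ Suc k"
      by (simp del: of_nat_Suc power_Suc)
    finally show ?thesis .
  qed
  have "(d * (1 + fps_const s * fps_X)) $ N = d $ N + s * (if N = 0 then 0 else d $ (N - 1))"
    by (simp add: algebra_simps)
  also have "\<dots> = (- fps_const s) $ N"
    by (cases N) (simp_all add: d_nth)
  finally have "(d * (1 + fps_const s * fps_X)) $ N = (- fps_const s) $ N" .
  moreover have "real (Suc m) = s"
    by (simp add: s_def)
  ultimately show
    "(d * (1 + fps_const (real (Suc m)) * fps_X)) $ N = (- fps_const (real (Suc m))) $ N"
    by simp
qed

lemma deriv_rising_expq:
  "fps_deriv (rising_expq m) = fps_deriv (fps_poly_eval (real m) Lambda) * rising_expq m"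
proof (induction m)
  case 0
  have "fps_poly_eval 0 Lambda = 0"
    by (rule fps_ext) (simp add: Lambda_def poly_0_coeff_0 coeff_power_sum_poly_0)
  thus ?case by (simp add: rising_expq_0)
next
  case (Suc m)
  have "1 + fps_const (real (Suc m)) * fps_X \<noteq> 0"
  proof
    assume "1 + fps_const (real (Suc m)) * fps_X = 0"
    hence "(1 + fps_const (real (Suc m)) * fps_X) $ 0 = 0" by simp
    thus False by simp
  qed
  thus ?case
    using fps_deriv_eq_mult_of_factor[OF rising_expq_Suc _ _ Suc.IH] deriv_Lambda_eval_Suc
    by simp
qed

lemma exp_Lambda_eval: "fps_exp 1 oo fps_poly_eval (real m) Lambda = rising_expq m"
proof (rule fps_linear_ode_unique)
  have "fps_poly_eval (real m) Lambda $ 0 = 0"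
    by (simp add: Lambda_def power_sum_poly_def)
  thus "fps_deriv (fps_exp 1 oo fps_poly_eval (real m) Lambda)
      = fps_deriv (fps_poly_eval (real m) Lambda) * (fps_exp 1 oo fps_poly_eval (real m) Lambda)"
    by (simp add: fps_compose_deriv mult.commute)
  show "fps_deriv (rising_expq m) = fps_deriv (fps_poly_eval (real m) Lambda) * rising_expq m"
    by (rule deriv_rising_expq)
qed (simp add: rising_expq_def expq_nth_0 fps_power_zeroth)

definition pochhammer_exp_gamma :: "real poly fps" where
  "pochhammer_exp_gamma = Abs_fps (\<lambda>N. pochhammer [:1, 1:] N
     * (\<Sum>k=0..N. monom ((gamma_fps ^ k) $ N / fact k) k))"

lemma fps_poly_eval_pochhammer_exp_gamma:
  "fps_poly_eval y pochhammer_exp_gamma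
    = Abs_fps (\<lambda>N. pochhammer (y + 1) N * (fps_exp 1 oo (fps_const y * gamma_fps)) $ N)"
  by (rule fps_ext) (simp add: pochhammer_exp_gamma_def poly_pochhammer_shift fps_compose_nth
      poly_sum poly_monom power_mult_distrib algebra_simps)

theorem fps_poly_exp_Lambda: "fps_poly_exp Lambda = pochhammer_exp_gamma"
proof (rule fps_ext)
  fix N
  show "fps_poly_exp Lambda $ N = pochhammer_exp_gamma $ N"
  proof (rule poly_eqI_of_nat)
    fix m
    have "fps_poly_eval (real m) (fps_poly_exp Lambda) = rising_expq m"
      by (simp add: fps_poly_eval_exp exp_Lambda_eval)
    also have "\<dots> = fps_poly_eval (real m) pochhammer_exp_gamma"
      by (simp add: fps_poly_eval_pochhammer_exp_gamma exp_of_nat_times_gamma_fps rising_expq_def)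
    finally show
      "poly (fps_poly_exp Lambda $ N) (of_nat m) = poly (pochhammer_exp_gamma $ N) (of_nat m)"
      by (metis fps_poly_eval_nth)
  qed
qed

section \<open>The coefficients of \<open>y^3 t^(2n)\<close>\<close>

lemma fps_poly_coeff_0_Lambda: "fps_poly_coeff 0 Lambda = 0"
  by (rule fps_ext) (simp add: Lambda_def coeff_power_sum_poly_0)

lemma fps_poly_coeff_1_Lambda: "fps_poly_coeff 1 Lambda $ i = bernoulli i / real i"
  unfolding fps_poly_coeff_nth Lambda_def fps_nth_Abs_fps by (rule coeff_power_sum_poly_1)

lemma fps_poly_coeff_2_Lambda:
  "fps_poly_coeff 2 Lambda $ i = (if i = 0 then 0 else - bernoulli (i - 1) / 2)"
  unfolding fps_poly_coeff_nth Lambda_def fps_nth_Abs_fps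
  by (simp add: coeff_power_sum_poly_2) (simp add: power_sum_poly_def)

lemma fps_poly_coeff_3_Lambda:
  "i \<ge> 2 \<Longrightarrow> fps_poly_coeff 3 Lambda $ i = real (i - 1) * bernoulli (i - 2) / 6"
  unfolding fps_poly_coeff_nth Lambda_def fps_nth_Abs_fps by (rule coeff_power_sum_poly_3)

lemma fps_poly_coeff_1_Lambda_cube_nth:
  assumes "n \<ge> 1"
  shows "(fps_poly_coeff 1 Lambda ^ 3) $ (2 * n)
    = (\<Sum>(k, l, m)\<in>comp3 n. bernoulli (2 * k) * bernoulli (2 * l) * bernoulli (2 * m)
        / (real (2 * k) * real (2 * l) * real (2 * m)))
      + 3 / 4 * (bernoulli (2 * n - 2) / real (2 * n - 2))"
proof -
  let ?f = "fps_poly_coeff 1 Lambda"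
  have "(?f ^ 3) $ (2 * n) = (\<Sum>(k, l, m)\<in>comp3 n. ?f $ (2 * k) * ?f $ (2 * l) * ?f $ (2 * m))
      + 3 * (?f $ 1)\<^sup>2 * ?f $ (2 * n - 2)"
    by (rule fps_cube_nth_odd_vanishing[OF _ _ assms])
      (unfold fps_poly_coeff_1_Lambda, auto simp: bernoulli_odd_eq_0)
  thus ?thesis
    unfolding fps_poly_coeff_1_Lambda bernoulli_1 by (simp add: power2_eq_square)
qed

lemma fps_poly_coeff_1_2_Lambda_mult_nth:
  assumes "n \<ge> 3"
  shows "(fps_poly_coeff 1 Lambda * fps_poly_coeff 2 Lambda) $ (2 * n)
    = (bernoulli (2 * n - 2) / real (2 * n - 2) + bernoulli (2 * n - 2)) / 4"
proof -
  let ?t = "\<lambda>i. fps_poly_coeff 1 Lambda $ i * fps_poly_coeff 2 Lambda $ (2 * n - i)"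
  have vanish: "?t i = 0" if "i \<in> {0..2 * n} - {1, 2 * n - 2}" for i
  proof (cases "i = 0 \<or> i = 2 * n")
    case True
    thus ?thesis
      unfolding fps_poly_coeff_1_Lambda fps_poly_coeff_2_Lambda by auto
  next
    case False
    hence "odd i \<and> i \<noteq> 1 \<or> odd (2 * n - i - 1) \<and> 2 * n - i - 1 \<noteq> 1"
      using that by auto
    hence "bernoulli i = 0 \<or> bernoulli (2 * n - i - 1) = 0"
      using bernoulli_odd_eq_0 by blast
    thus ?thesis
      using False unfolding fps_poly_coeff_1_Lambda fps_poly_coeff_2_Lambda by auto
  qed
  have "(fps_poly_coeff 1 Lambda * fps_poly_coeff 2 Lambda) $ (2 * n) = (\<Sum>i\<in>{1, 2 * n - 2}. ?t i)"
    unfolding fps_mult_nth using vanish assms by (intro sum.mono_neutral_right) auto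
  also have "\<dots> = ?t 1 + ?t (2 * n - 2)"
    using assms by simp
  also have "\<dots> = (bernoulli (2 * n - 2) / real (2 * n - 2) + bernoulli (2 * n - 2)) / 4"
    using assms unfolding fps_poly_coeff_1_Lambda fps_poly_coeff_2_Lambda bernoulli_1
    by (simp add: of_nat_diff numeral_2_eq_2 bernoulli_1[simplified] field_simps)
  finally show ?thesis .
qed

lemma fps_poly_coeff_3_exp_Lambda_double:
  assumes "n \<ge> 3"
  shows "6 * fps_poly_coeff 3 (fps_poly_exp Lambda) $ (2 * n)
    = (\<Sum>(k, l, m)\<in>comp3 n. bernoulli (2 * k) * bernoulli (2 * l) * bernoulli (2 * m)
        / (real (2 * k) * real (2 * l) * real (2 * m)))
      + (4 * (real n)\<^sup>2 - 3 * real n + 5 / 4) * bernoulli (2 * n - 2) / real (2 * n - 2)"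
proof -
  have n1: "n \<ge> 1"
    using assms by simp
  define q where "q = bernoulli (2 * n - 2) / real (2 * n - 2)"
  have b: "bernoulli (2 * n - 2) = (2 * real n - 2) * q"
    using assms by (simp add: q_def of_nat_diff)
  have "fps_poly_coeff 3 Lambda $ (2 * n) = real (2 * n - 1) * bernoulli (2 * n - 2) / 6"
    using assms fps_poly_coeff_3_Lambda[of "2 * n"] by (simp add: numeral_2_eq_2)
  also have "real (2 * n - 1) = 2 * real n - 1"
    using assms by (simp add: of_nat_diff)
  finally have "fps_poly_coeff 3 Lambda $ (2 * n) = (2 * real n - 1) * bernoulli (2 * n - 2) / 6" .
  moreover have "fps_poly_coeff 3 (fps_poly_exp Lambda) $ (2 * n)
      = fps_poly_coeff 3 Lambda $ (2 * n)
        + (fps_poly_coeff 1 Lambda * fps_poly_coeff 2 Lambda) $ (2 * n)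
        + (fps_poly_coeff 1 Lambda ^ 3) $ (2 * n) / 6"
    by (rule fps_poly_coeff_3_exp[OF fps_poly_coeff_0_Lambda]) (use assms in simp)
  ultimately show ?thesis
    using assms
    unfolding fps_poly_coeff_1_2_Lambda_mult_nth[OF assms] fps_poly_coeff_1_Lambda_cube_nth[OF n1]
      q_def[symmetric] times_divide_eq_right[symmetric]
    unfolding b by (simp add: field_simps power2_eq_square)
qed

lemma fps_poly_coeff_3_pochhammer_exp_gamma:
  assumes "N \<ge> 3"
  shows "fps_poly_coeff 3 pochhammer_exp_gamma $ N
    = fact N * ((gamma_fps ^ 3) $ N / 6 + harm N * (gamma_fps ^ 2) $ N / 2 + harm2 N * gamma_fps $ N)"
proof -
  let ?R = "\<Sum>k=0..N. monom ((gamma_fps ^ k) $ N / fact k) k"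
  have coeff_R: "coeff ?R j = (gamma_fps ^ j) $ N / fact j" if "j \<le> N" for j
    using that by (simp add: coeff_sum coeff_monom)
  let ?P = "pochhammer [:1, 1:] N"
  have "fps_poly_coeff 3 pochhammer_exp_gamma $ N = (\<Sum>i\<le>3. coeff ?P i * coeff ?R (3 - i))"
    by (simp add: pochhammer_exp_gamma_def coeff_mult)
  also have "\<dots> = coeff ?P 0 * coeff ?R 3 + coeff ?P 1 * coeff ?R 2
      + coeff ?P 2 * coeff ?R 1 + coeff ?P 3 * coeff ?R 0"
    by (simp add: sum_atMost_3)
  finally show ?thesis
    using assms
    unfolding coeff_pochhammer_shift_0 coeff_pochhammer_shift_1 coeff_pochhammer_shift_2
    by (simp add: coeff_R fact_numeral algebra_simps)
qed

lemma gamma_fps_odd_nth: "odd i \<Longrightarrow> i \<noteq> 1 \<Longrightarrow> gamma_fps $ i = 0"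
  by (simp add: gamma_fps_nth bernoulli_odd_eq_0)

lemma gamma_fps_cube_nth:
  assumes "n \<ge> 1"
  shows "(gamma_fps ^ 3) $ (2 * n)
    = (\<Sum>(k, l, m)\<in>comp3 n. gamma_fps $ (2 * k) * gamma_fps $ (2 * l) * gamma_fps $ (2 * m))
      + 3 / 4 * gamma_fps $ (2 * n - 2)"
proof -
  have "(gamma_fps ^ 3) $ (2 * n)
      = (\<Sum>(k, l, m)\<in>comp3 n. gamma_fps $ (2 * k) * gamma_fps $ (2 * l) * gamma_fps $ (2 * m))
        + 3 * (gamma_fps $ 1)\<^sup>2 * gamma_fps $ (2 * n - 2)"
    by (rule fps_cube_nth_odd_vanishing[OF gamma_fps_odd_nth gamma_fps_nth_0 assms])
  thus ?thesis
    unfolding gamma_fps_nth[of 1] bernoulli_1 by (simp add: power2_eq_square)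
qed

lemma fact_double_mult_gamma_fps_nth:
  assumes "n \<ge> 2"
  shows "fact (2 * n) * gamma_fps $ (2 * n - 2)
    = real (2 * n) * real (2 * n - 1) * bernoulli (2 * n - 2) / real (2 * n - 2)"
proof -
  obtain m where "n = Suc m"
    using assms by (cases n) auto
  hence "2 * n = Suc (Suc (2 * m))"
    by simp
  hence "(fact (2 * n) :: real) = real (2 * n) * real (2 * n - 1) * fact (2 * n - 2)"
    by (simp only: fact_Suc mult.assoc diff_Suc_Suc diff_zero numeral_2_eq_2 One_nat_def)
  thus ?thesis
    by (simp add: gamma_fps_nth)
qed

lemma fps_poly_coeff_3_pochhammer_exp_gamma_double:
  assumes "n \<ge> 3"
  shows "6 * fps_poly_coeff 3 pochhammer_exp_gamma $ (2 * n)
    = 3 / (2 * real n) * (\<Sum>(k, l, m)\<in>comp3 n. bernoulli (2 * k) * bernoulli (2 * l) * bernoulli (2 * m)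
        / (real (2 * k) * real (2 * l)) * multinom3 (2 * n) (2 * k) (2 * l) (2 * m))
      + 3 / real n * harm (2 * n) * (\<Sum>k=1..n - 1. real ((2 * n) choose (2 * k))
        * bernoulli (2 * k) * bernoulli (2 * n - 2 * k) / real (2 * k))
      + 6 * harm2 (2 * n) * bernoulli (2 * n) / real (2 * n)
      + (3 * (real n)\<^sup>2 - 3 / 2 * real n) * bernoulli (2 * n - 2) / real (2 * n - 2)"
proof -
  let ?G3 = "\<Sum>(k, l, m)\<in>comp3 n. gamma_fps $ (2 * k) * gamma_fps $ (2 * l) * gamma_fps $ (2 * m)"
  let ?G2 = "\<Sum>k=1..n - 1. gamma_fps $ (2 * k) * gamma_fps $ (2 * n - 2 * k)"
  have n1: "n \<ge> 1" and n2: "n \<ge> 2"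
    using assms by auto
  have square: "(gamma_fps ^ 2) $ (2 * n) = ?G2"
    by (rule fps_square_nth_odd_vanishing[OF gamma_fps_odd_nth gamma_fps_nth_0 n2])
  have "6 * fps_poly_coeff 3 pochhammer_exp_gamma $ (2 * n)
      = fact (2 * n) * ?G3 + 3 * (fact (2 * n) * harm (2 * n) * ?G2)
        + 6 * (fact (2 * n) * harm2 (2 * n) * gamma_fps $ (2 * n))
        + 3 / 4 * (fact (2 * n) * gamma_fps $ (2 * n - 2))"
    using fps_poly_coeff_3_pochhammer_exp_gamma[of "2 * n"] assms
    unfolding gamma_fps_cube_nth[OF n1] square by (simp add: algebra_simps)
  also have "fact (2 * n) * ?G3 = 3 / (2 * real n) * (\<Sum>(k, l, m)\<in>comp3 n.
      bernoulli (2 * k) * bernoulli (2 * l) * bernoulli (2 * m)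
        / (real (2 * k) * real (2 * l)) * multinom3 (2 * n) (2 * k) (2 * l) (2 * m))"
    unfolding gamma_fps_nth comp3_multinom3_sum[OF n1] ..
  also have "3 * (fact (2 * n) * harm (2 * n) * ?G2) = 3 / real n * harm (2 * n)
      * (\<Sum>k=1..n - 1. real ((2 * n) choose (2 * k)) * bernoulli (2 * k) * bernoulli (2 * n - 2 * k)
        / real (2 * k))"
    using n1 unfolding gamma_fps_nth sum_binomial_double by simp
  also have "6 * (fact (2 * n) * harm2 (2 * n) * gamma_fps $ (2 * n))
      = 6 * harm2 (2 * n) * bernoulli (2 * n) / real (2 * n)"
    by (simp add: gamma_fps_nth)
  also have "3 / 4 * (fact (2 * n) * gamma_fps $ (2 * n - 2))
      = (3 * (real n)\<^sup>2 - 3 / 2 * real n) * bernoulli (2 * n - 2) / real (2 * n - 2)"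
  proof -
    have "real (2 * n - 2) \<noteq> 0"
      using n2 by simp
    thus ?thesis
      unfolding fact_double_mult_gamma_fps_nth[OF n2] using n2
      by (simp add: of_nat_diff power2_eq_square field_simps)
  qed
  finally show ?thesis .
qed

theorem theorem5p2:
  fixes n :: nat
  assumes "n \<ge> 3"
  shows "(\<Sum>(k,l,m)\<in>comp3 n. bernoulli (2*k) * bernoulli (2*l) * bernoulli (2*m)
            / (real (2*k) * real (2*l) * real (2*m)))
       = 3 / (2 * real n) * (\<Sum>(k,l,m)\<in>comp3 n. bernoulli (2*k) * bernoulli (2*l) * bernoulli (2*m)
            / (real (2*k) * real (2*l)) * multinom3 (2*n) (2*k) (2*l) (2*m))
         + 3 / real n * harm (2*n) * (\<Sum>k=1..n-1. real ((2*n) choose (2*k))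
            * bernoulli (2*k) * bernoulli (2*n - 2*k) / real (2*k))
         + 6 * harm2 (2*n) * bernoulli (2*n) / real (2*n)
         - ((real n)^2 - 3/2 * real n + 5/4) * bernoulli (2*n - 2) / real (2*n - 2)"
proof -
  have "6 * fps_poly_coeff 3 (fps_poly_exp Lambda) $ (2 * n)
      = 6 * fps_poly_coeff 3 pochhammer_exp_gamma $ (2 * n)"
    by (simp only: fps_poly_exp_Lambda)
  moreover have "(4 * (real n)\<^sup>2 - 3 * real n + 5 / 4) * bernoulli (2 * n - 2) / real (2 * n - 2)
      = (3 * (real n)\<^sup>2 - 3 / 2 * real n) * bernoulli (2 * n - 2) / real (2 * n - 2)
        + ((real n)\<^sup>2 - 3 / 2 * real n + 5 / 4) * bernoulli (2 * n - 2) / real (2 * n - 2)"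
    unfolding add_divide_distrib[symmetric] by (simp add: algebra_simps)
  ultimately show ?thesis
    unfolding fps_poly_coeff_3_exp_Lambda_double[OF assms]
      fps_poly_coeff_3_pochhammer_exp_gamma_double[OF assms]
    by linarith
qed

end
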